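(* Let $p$ be a prime, $a\in\mathbb{Q}_p$, $a\ne0$, with $\sqrt{-a}\in\mathbb{Q}_p$, $A=|a|_p$, and $f(x)=\frac{ax}{x^2+a}$ on $\mathbb{Q}_p$. Let $0<r<\sqrt A$, $\rho(r)=r^3/A$, and $c\in\mathbb{Q}_p$ with $|c|_p=r$. Then: 1. $|f^{n+1}(c)-f^n(c)|_p=\rho(r)$ for every $n\ge1$. 2. $f(V_{\rho(r)}(c))=V_{\rho(r)}(c)$. 3. If for some $\theta>0$ the ball $V_\theta(c)\subset S_r(0)$ is invariant under $f$ (i.e. $f(V_\theta(c))\subseteq V_\theta(c)$), then $\theta\ge\rho(r)$.
   Context: $V_\theta(c)=\{x\in\mathbb{Q}_p:|x-c|_p\le\theta\}$, $S_r(0)=\{x\in\mathbb{Q}_p:|x|_p=r\}$; $f^n$ is the $n$-th iterate of $f$. *)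

theory Defs
  imports Complex_Main "HOL-Computational_Algebra.Primes"
begin

definition padic_val_rat :: "nat \<Rightarrow> rat \<Rightarrow> int" where
  "padic_val_rat p q =
     (let (n, d) = quotient_of q
      in int (multiplicity (int p) n) - int (multiplicity (int p) d))"

definition padic_abs_rat :: "nat \<Rightarrow> rat \<Rightarrow> real" where
  "padic_abs_rat p q = (if q = 0 then 0 else real p powi (- padic_val_rat p q))"

text \<open>The field of p-adic numbers, characterised up to isometric isomorphism:
  a field K (of characteristic 0, containing Q via of_rat) with a
  (non-archimedean) absolute value that restricts to the p-adic absolute value
  on Q, in which Q is dense, and which is complete.  This is exactly the
  completion of Q w.r.t. the p-adic absolute value, i.e. Q_p.\<close>

definition is_Qp :: "nat \<Rightarrow> ('a::field_char_0 \<Rightarrow> real) \<Rightarrow> bool" where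
  "is_Qp p absv \<longleftrightarrow>
     (\<forall>x. absv x \<ge> 0) \<and>
     (\<forall>x. absv x = 0 \<longleftrightarrow> x = 0) \<and>
     (\<forall>x y. absv (x * y) = absv x * absv y) \<and>
     (\<forall>x y. absv (x + y) \<le> max (absv x) (absv y)) \<and>
     (\<forall>q. absv (of_rat q) = padic_abs_rat p q) \<and>
     (\<forall>x. \<forall>\<epsilon>>0. \<exists>q. absv (x - of_rat q) < \<epsilon>) \<and>
     (\<forall>X::nat \<Rightarrow> 'a.
        (\<forall>\<epsilon>>0. \<exists>N. \<forall>m\<ge>N. \<forall>n\<ge>N. absv (X m - X n) < \<epsilon>) \<longrightarrow>
        (\<exists>L. \<forall>\<epsilon>>0. \<exists>N. \<forall>n\<ge>N. absv (X n - L) < \<epsilon>))"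

definition pball :: "('a \<Rightarrow> real) \<Rightarrow> real \<Rightarrow> 'a::ab_group_add \<Rightarrow> 'a set" where
  "pball absv \<theta> c = {x. absv (x - c) \<le> \<theta>}"

definition psphere0 :: "('a \<Rightarrow> real) \<Rightarrow> real \<Rightarrow> 'a set" where
  "psphere0 absv r = {x. absv x = r}"

end

theory Submission
  imports Defs
begin

text \<open>On the sphere \<open>|x| = r\<close> with \<open>r\<^sup>2 < |a|\<close> the denominator satisfies \<open>|x\<^sup>2 + a| = |a|\<close>, and
  \<open>f x = x - h x\<close> with \<open>h x = x\<^sup>3 / (x\<^sup>2 + a)\<close> of constant size \<open>|h x| = r\<^sup>3/|a| = \<rho>\<close>. Hence every
  step of the orbit has length exactly \<open>\<rho>\<close>, which forces \<open>\<theta> \<ge> \<rho>\<close> for an invariant ball, and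
  \<open>f\<close> maps \<open>V\<^sub>\<rho>(c)\<close> into itself by the ultrametric inequality. On the sphere \<open>h\<close> is a
  contraction with constant \<open>r\<^sup>2/|a| < 1\<close>, so for \<open>y \<in> V\<^sub>\<rho>(c)\<close> the map \<open>x \<mapsto> y + h x\<close> has a
  fixed point in \<open>V\<^sub>\<rho>(c)\<close> by completeness; this is a preimage of \<open>y\<close>.\<close>

locale nonarch_abs =
  fixes absv :: "'a::field \<Rightarrow> real"
  assumes abs_nonneg: "\<And>x. absv x \<ge> 0"
    and abs_eq_0_iff: "\<And>x. absv x = 0 \<longleftrightarrow> x = 0"
    and abs_mult: "\<And>x y. absv (x * y) = absv x * absv y"
    and abs_add_le_max: "\<And>x y. absv (x + y) \<le> max (absv x) (absv y)"
begin

lemma abs_zero [simp]: "absv 0 = 0"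
  using abs_eq_0_iff by simp

lemma abs_one [simp]: "absv 1 = 1"
proof -
  have "absv 1 * absv 1 = absv 1" using abs_mult[of 1 1] by simp
  moreover have "absv 1 \<noteq> 0" using abs_eq_0_iff by simp
  ultimately show ?thesis by simp
qed

lemma abs_minus [simp]: "absv (- x) = absv x"
proof -
  have "absv (-1) * absv (-1) = 1" using abs_mult[of "-1" "-1"] by simp
  hence "absv (-1) = 1" using abs_nonneg[of "-1"]
    by (metis abs_of_nonneg abs_square_eq_1 power2_eq_square)
  thus ?thesis using abs_mult[of "-1" x] by simp
qed

lemma abs_minus_commute: "absv (x - y) = absv (y - x)"
  using abs_minus[of "x - y"] by simp

lemma abs_power: "absv (x ^ n) = absv x ^ n"
  by (induction n) (simp_all add: abs_mult)

lemma abs_divide: "absv (x / y) = absv x / absv y"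
proof (cases "y = 0")
  case False
  have "absv (inverse y) * absv y = 1" using abs_mult[of "inverse y" y] False by simp
  hence "absv (inverse y) = 1 / absv y" using abs_eq_0_iff[of y] False by (simp add: field_simps)
  thus ?thesis using abs_mult[of x "inverse y"] by (simp add: divide_inverse)
qed simp

lemma abs_add_eq_of_less: "absv x < absv y \<Longrightarrow> absv (x + y) = absv y"
  using abs_add_le_max[of x y] abs_add_le_max[of "x + y" "- x"] by (auto simp: max_def split: if_splits)

lemma abs_diff_le_max: "absv (x - z) \<le> max (absv (x - y)) (absv (y - z))"
  using abs_add_le_max[of "x - y" "y - z"] by simp

lemma pball_subset_psphere0:
  assumes "absv c = r" "\<rho> < r"
  shows "pball absv \<rho> c \<subseteq> psphere0 absv r"
proof
  fix x assume "x \<in> pball absv \<rho> c"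
  hence "absv (x - c) < absv c" using assms unfolding pball_def by simp
  hence "absv (x - c + c) = r" using abs_add_eq_of_less assms(1) by metis
  thus "x \<in> psphere0 absv r" unfolding psphere0_def by simp
qed

definition abs_cauchy :: "(nat \<Rightarrow> 'a) \<Rightarrow> bool" where
  "abs_cauchy X \<longleftrightarrow> (\<forall>\<epsilon>>0. \<exists>N. \<forall>m\<ge>N. \<forall>n\<ge>N. absv (X m - X n) < \<epsilon>)"

definition abs_tendsto :: "(nat \<Rightarrow> 'a) \<Rightarrow> 'a \<Rightarrow> bool" where
  "abs_tendsto X L \<longleftrightarrow> (\<forall>\<epsilon>>0. \<exists>N. \<forall>n\<ge>N. absv (X n - L) < \<epsilon>)"

text \<open>In an ultrametric space geometric decay of consecutive distances already bounds all
  later distances, without summing a series.\<close>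

lemma abs_dist_le_if_geometric_steps:
  assumes "\<And>n. absv (X (Suc n) - X n) \<le> k ^ n * d" "0 \<le> k" "k \<le> 1" "0 \<le> d" "n \<le> m"
  shows "absv (X m - X n) \<le> k ^ n * d"
  using \<open>n \<le> m\<close>
proof (induction m rule: dec_induct)
  case base
  show ?case using assms(2,4) by simp
next
  case (step m)
  have "k ^ m * d \<le> k ^ n * d"
    using step(1) assms(2-4) by (intro mult_right_mono power_decreasing) auto
  thus ?case using abs_diff_le_max[of "X (Suc m)" "X n" "X m"] assms(1)[of m] step(3) by linarith
qed

lemma abs_cauchy_if_geometric_steps:
  assumes steps: "\<And>n. absv (X (Suc n) - X n) \<le> k ^ n * d" and "0 \<le> k" "k < 1" "0 \<le> d"
  shows "abs_cauchy X"
  unfolding abs_cauchy_def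
proof (intro allI impI)
  fix \<epsilon> :: real assume "\<epsilon> > 0"
  then obtain N where N: "k ^ N < \<epsilon> / (d + 1)"
    using real_arch_pow_inv[of "\<epsilon> / (d + 1)" k] assms(3,4) by auto
  have "k ^ N * d \<le> k ^ N * (d + 1)" using assms(2) by (simp add: mult_left_mono)
  also have "\<dots> < \<epsilon>" using N assms(4) by (simp add: pos_less_divide_eq)
  finally have small: "k ^ N * d < \<epsilon>" .
  have tail: "absv (X m - X n) < \<epsilon>" if "N \<le> n" "n \<le> m" for m n
  proof -
    have "k ^ n * d \<le> k ^ N * d"
      using that assms(2-4) by (intro mult_right_mono power_decreasing) auto
    thus ?thesis
      using abs_dist_le_if_geometric_steps[OF steps assms(2) _ assms(4) \<open>n \<le> m\<close>] assms(3) small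
      by linarith
  qed
  show "\<exists>N. \<forall>m\<ge>N. \<forall>n\<ge>N. absv (X m - X n) < \<epsilon>"
    using tail abs_minus_commute by (metis nle_le)
qed

lemma abs_tendsto_in_pball:
  assumes "abs_tendsto X L" "\<And>n. X n \<in> pball absv \<rho> c"
  shows "L \<in> pball absv \<rho> c"
proof (rule ccontr)
  assume "L \<notin> pball absv \<rho> c"
  hence far: "absv (L - c) > \<rho>" unfolding pball_def by simp
  moreover have "\<rho> \<ge> 0" using assms(2)[of 0] abs_nonneg[of "X 0 - c"] unfolding pball_def by simp
  ultimately obtain N where "absv (X N - L) < absv (L - c)"
    using assms(1) unfolding abs_tendsto_def by (metis order_le_less_trans order_refl)
  thus False
    using abs_diff_le_max[of L c "X N"] abs_minus_commute[of L "X N"] assms(2)[of N] far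
    unfolding pball_def by auto
qed

lemma abs_tendsto_fixpoint:
  assumes lim: "abs_tendsto X L" and orbit: "\<And>n. X (Suc n) = T (X n)"
    and lip: "\<And>n. absv (T L - T (X n)) \<le> absv (L - X n)"
  shows "T L = L"
proof -
  have "absv (T L - L) < \<epsilon>" if "\<epsilon> > 0" for \<epsilon>
  proof -
    obtain N where N: "\<forall>n\<ge>N. absv (X n - L) < \<epsilon>" using lim \<open>\<epsilon> > 0\<close> unfolding abs_tendsto_def by blast
    have "absv (T L - X (Suc N)) < \<epsilon>"
      using lip[of N] N abs_minus_commute[of L "X N"] orbit[of N] by fastforce
    moreover have "absv (X (Suc N) - L) < \<epsilon>" using N by simp
    ultimately show ?thesis using abs_diff_le_max[of "T L" L "X (Suc N)"] by linarith
  qed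
  hence "absv (T L - L) = 0" using abs_nonneg[of "T L - L"] by (metis less_irrefl order_le_less)
  thus ?thesis using abs_eq_0_iff by simp
qed

end

locale complete_nonarch_abs = nonarch_abs +
  assumes abs_cauchy_convergent: "\<And>X. abs_cauchy X \<Longrightarrow> \<exists>L. abs_tendsto X L"
begin

lemma contraction_has_fixpoint_in_pball:
  assumes "0 \<le> k" "k < 1" and maps: "T ` pball absv \<rho> c \<subseteq> pball absv \<rho> c"
    and lip: "\<And>x y. x \<in> pball absv \<rho> c \<Longrightarrow> y \<in> pball absv \<rho> c \<Longrightarrow>
                absv (T x - T y) \<le> k * absv (x - y)"
    and "x\<^sub>0 \<in> pball absv \<rho> c"
  shows "\<exists>x \<in> pball absv \<rho> c. T x = x"
proof -
  define X where "X n = (T ^^ n) x\<^sub>0" for n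
  have orbit: "X (Suc n) = T (X n)" for n unfolding X_def by simp
  have in_ball: "X n \<in> pball absv \<rho> c" for n
    by (induction n) (use \<open>x\<^sub>0 \<in> _\<close> maps in \<open>auto simp: X_def\<close>)
  have steps: "absv (X (Suc n) - X n) \<le> k ^ n * absv (X 1 - X 0)" for n
  proof (induction n)
    case (Suc n)
    have "absv (X (Suc (Suc n)) - X (Suc n)) \<le> k * absv (X (Suc n) - X n)"
      using lip[OF in_ball in_ball, of "Suc n" n] by (simp only: orbit)
    also have "\<dots> \<le> k * (k ^ n * absv (X 1 - X 0))" using Suc.IH \<open>0 \<le> k\<close> by (rule mult_left_mono)
    finally show ?case by simp
  qed simp
  obtain L where L: "abs_tendsto X L"
    using abs_cauchy_convergent abs_cauchy_if_geometric_steps[OF steps assms(1,2) abs_nonneg] by blast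
  have "L \<in> pball absv \<rho> c" using abs_tendsto_in_pball[OF L in_ball] .
  moreover have "absv (T L - T (X n)) \<le> absv (L - X n)" for n
    using lip[OF \<open>L \<in> _\<close> in_ball[of n]] mult_left_le_one_le[OF abs_nonneg assms(1)] assms(2)
    by (meson less_imp_le order_trans)
  ultimately show ?thesis using abs_tendsto_fixpoint[OF L orbit] by blast
qed

end

locale rational_map_sphere = nonarch_abs +
  fixes a :: 'a and r :: real
  assumes a_nonzero: "a \<noteq> 0" and r_pos: "0 < r" and r_sq_less: "r\<^sup>2 < absv a"
begin

definition f :: "'a \<Rightarrow> 'a" where "f x = a * x / (x\<^sup>2 + a)"
definition h :: "'a \<Rightarrow> 'a" where "h x = x ^ 3 / (x\<^sup>2 + a)"
definition \<rho> :: real where "\<rho> = r ^ 3 / absv a"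

lemma abs_a_pos: "absv a > 0"
  using r_sq_less r_pos by (meson less_trans zero_less_power)

lemma \<rho>_pos: "\<rho> > 0"
  unfolding \<rho>_def using r_pos abs_a_pos by simp

lemma \<rho>_less_r: "\<rho> < r"
proof -
  have "r * (r\<^sup>2 / absv a) < r * 1" using r_sq_less abs_a_pos r_pos by (intro mult_strict_left_mono) simp_all
  thus ?thesis unfolding \<rho>_def by (simp add: power3_eq_cube power2_eq_square)
qed

lemma abs_denominator: "absv x = r \<Longrightarrow> absv (x\<^sup>2 + a) = absv a"
  using abs_add_eq_of_less[of "x\<^sup>2" a] abs_power[of x 2] r_sq_less by simp

lemma denominator_nonzero: "absv x = r \<Longrightarrow> x\<^sup>2 + a \<noteq> 0"
  using abs_denominator abs_a_pos by fastforce

lemma f_eq_diff_h: "absv x = r \<Longrightarrow> f x = x - h x"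
  using denominator_nonzero unfolding f_def h_def
  by (simp add: field_simps power2_eq_square power3_eq_cube)

lemma abs_h: "absv x = r \<Longrightarrow> absv (h x) = \<rho>"
  unfolding h_def \<rho>_def by (simp add: abs_divide abs_power abs_denominator)

lemma abs_f_diff: "absv x = r \<Longrightarrow> absv (f x - x) = \<rho>"
  using f_eq_diff_h abs_h by simp

lemma abs_f: "absv x = r \<Longrightarrow> absv (f x) = r"
  using abs_add_eq_of_less[of "- h x" x] abs_h \<rho>_less_r f_eq_diff_h by simp

lemma h_lipschitz:
  assumes x: "absv x = r" and y: "absv y = r"
  shows "absv (h x - h y) \<le> r\<^sup>2 / absv a * absv (x - y)"
proof -
  define N where "N = x\<^sup>2 * y\<^sup>2 + a * (x\<^sup>2 + x * y + y\<^sup>2)"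
  have "h x - h y = (x - y) * N / ((x\<^sup>2 + a) * (y\<^sup>2 + a))"
    using denominator_nonzero[OF x] denominator_nonzero[OF y] unfolding h_def N_def
    by (simp add: field_simps power2_eq_square power3_eq_cube)
  hence eq: "absv (h x - h y) = absv (x - y) * absv N / (absv a * absv a)"
    by (simp add: abs_divide abs_mult abs_denominator x y)
  have "absv (x\<^sup>2 + x * y + y\<^sup>2) \<le> r\<^sup>2"
    using abs_add_le_max[of "x\<^sup>2 + x * y" "y\<^sup>2"] abs_add_le_max[of "x\<^sup>2" "x * y"] x y
    by (simp add: abs_power abs_mult power2_eq_square)
  hence "absv (a * (x\<^sup>2 + x * y + y\<^sup>2)) \<le> absv a * r\<^sup>2"
    using abs_a_pos by (simp add: abs_mult mult_left_mono)
  moreover have "absv (x\<^sup>2 * y\<^sup>2) \<le> absv a * r\<^sup>2"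
    using x y r_sq_less r_pos by (simp add: abs_mult abs_power power2_eq_square mult_right_mono)
  ultimately have "absv N \<le> absv a * r\<^sup>2"
    unfolding N_def using abs_add_le_max[of "x\<^sup>2 * y\<^sup>2" "a * (x\<^sup>2 + x * y + y\<^sup>2)"] by simp
  hence "absv (x - y) * absv N / (absv a * absv a) \<le> absv (x - y) * (absv a * r\<^sup>2) / (absv a * absv a)"
    using abs_nonneg[of "x - y"] abs_a_pos by (intro divide_right_mono mult_left_mono) simp_all
  also have "\<dots> = r\<^sup>2 / absv a * absv (x - y)"
    using abs_a_pos by (simp add: field_simps power2_eq_square)
  finally show ?thesis unfolding eq .
qed

lemma f_orbit_step: "absv c = r \<Longrightarrow> absv ((f ^^ Suc n) c - (f ^^ n) c) = \<rho>"
proof -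
  assume "absv c = r"
  hence "absv ((f ^^ n) c) = r" by (induction n) (simp_all add: abs_f)
  thus ?thesis by (simp add: abs_f_diff)
qed

lemma f_image_pball_subset:
  assumes "absv c = r"
  shows "f ` pball absv \<rho> c \<subseteq> pball absv \<rho> c"
proof
  fix w assume "w \<in> f ` pball absv \<rho> c"
  then obtain x where x: "x \<in> pball absv \<rho> c" and w: "w = f x" by blast
  have "absv x = r" using x pball_subset_psphere0[OF assms \<rho>_less_r] unfolding psphere0_def by blast
  thus "w \<in> pball absv \<rho> c"
    using x abs_diff_le_max[of "f x" c x] abs_f_diff unfolding pball_def w by simp
qed

lemma invariant_pball_radius_ge:
  assumes "absv c = r" "\<theta> \<ge> 0" "f ` pball absv \<theta> c \<subseteq> pball absv \<theta> c"
  shows "\<theta> \<ge> \<rho>"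
proof -
  have "c \<in> pball absv \<theta> c" unfolding pball_def using assms(2) by simp
  hence "f c \<in> pball absv \<theta> c" using assms(3) by blast
  thus ?thesis using abs_f_diff[OF assms(1)] unfolding pball_def by simp
qed

end

locale complete_rational_map_sphere = rational_map_sphere + complete_nonarch_abs
begin

lemma pball_subset_f_image:
  assumes c: "absv c = r"
  shows "pball absv \<rho> c \<subseteq> f ` pball absv \<rho> c"
proof
  fix y assume y: "y \<in> pball absv \<rho> c"
  have sphere: "absv x = r" if "x \<in> pball absv \<rho> c" for x
    using that pball_subset_psphere0[OF c \<rho>_less_r] unfolding psphere0_def by blast
  have "y + h x \<in> pball absv \<rho> c" if "x \<in> pball absv \<rho> c" for x
    using y abs_add_le_max[of "y - c" "h x"] abs_h[OF sphere[OF that]] unfolding pball_def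
    by (simp add: algebra_simps)
  hence "(\<lambda>x. y + h x) ` pball absv \<rho> c \<subseteq> pball absv \<rho> c" by blast
  moreover have "absv ((y + h x) - (y + h x')) \<le> r\<^sup>2 / absv a * absv (x - x')"
    if "x \<in> pball absv \<rho> c" "x' \<in> pball absv \<rho> c" for x x'
    using h_lipschitz[OF sphere[OF that(1)] sphere[OF that(2)]] by simp
  moreover have "0 \<le> r\<^sup>2 / absv a" "r\<^sup>2 / absv a < 1" using r_sq_less abs_a_pos by auto
  ultimately obtain x where x: "x \<in> pball absv \<rho> c" "y + h x = x"
    using contraction_has_fixpoint_in_pball[where T = "\<lambda>x. y + h x", OF _ _ _ _ y] by blast
  hence "f x = y" using f_eq_diff_h[OF sphere[OF x(1)]] by (metis add_diff_cancel_right')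
  thus "y \<in> f ` pball absv \<rho> c" using x by blast
qed

end

theorem theorem3p4:
  fixes p :: nat and absv :: "'a::field_char_0 \<Rightarrow> real"
    and a c :: 'a and r :: real
  assumes "prime p"
    and "is_Qp p absv"
    and "a \<noteq> 0"
    and "\<exists>s. s * s = - a"
    and "0 < r" and "r < sqrt (absv a)"
    and "absv c = r"
  defines "f \<equiv> (\<lambda>x. a * x / (x ^ 2 + a))"
    and "\<rho> \<equiv> r ^ 3 / absv a"
  shows "(\<forall>n\<ge>1. absv ((f ^^ (n + 1)) c - (f ^^ n) c) = \<rho>)
       \<and> f ` pball absv \<rho> c = pball absv \<rho> c
       \<and> (\<forall>\<theta>>0. pball absv \<theta> c \<subseteq> psphere0 absv r
                 \<and> f ` pball absv \<theta> c \<subseteq> pball absv \<theta> c \<longrightarrow> \<theta> \<ge> \<rho>)"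
proof -
  have "r\<^sup>2 < (sqrt (absv a))\<^sup>2" using assms(5,6) by (intro power_strict_mono) auto
  moreover have "absv a \<ge> 0" using assms(2) unfolding is_Qp_def by blast
  ultimately have "r\<^sup>2 < absv a" by simp
  note Qp = assms(2)[unfolded is_Qp_def]
  interpret nonarch_abs absv using Qp by unfold_locales blast+
  interpret M: complete_rational_map_sphere absv a r
    using Qp assms(3,5) \<open>r\<^sup>2 < absv a\<close>
    by unfold_locales (auto simp: abs_cauchy_def abs_tendsto_def)
  have "f = M.f" "\<rho> = M.\<rho>" by (simp_all add: f_def M.f_def \<rho>_def M.\<rho>_def fun_eq_iff)
  thus ?thesis
    using M.f_orbit_step[OF assms(7)] M.invariant_pball_radius_ge[OF assms(7)]
      M.f_image_pball_subset[OF assms(7)] M.pball_subset_f_image[OF assms(7)]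
    by (auto simp del: funpow.simps)
qed

end
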